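(* Let $q\ge 2$ be a prime power and $m\ge1$ an integer, and let $H_m=\sum_{k=1}^m \frac1k$ be the $m$-th harmonic number. Then $$\prod_{\deg p\le m}\left(1+\frac{1}{|p|}\right)<\exp(H_m),$$ where the product runs over all monic irreducible polynomials $p\in\mathbb{F}_q[x]$ of degree at most $m$.
   Context: For $f\in\mathbb{F}_q[x]$, $|f|=q^{\deg f}$. *)

theory Defs
  imports "HOL-Analysis.Analysis" "HOL-Computational_Algebra.Polynomial_Factorial"
begin

definition poly_abs :: "'a::{finite,field} poly \<Rightarrow> real" where
  "poly_abs f = real (CARD('a)) ^ degree f"

end

theory Submission
  imports Defs
begin

text \<open>Let S(N) be the sum of deg p / |p| over the monic irreducible p of degree at most N.
  Counting the pairs (p, f) with f monic of degree N and p dividing f, weighted by deg p,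
  gives q^N S(N) \<le> N q^N: each p divides q^(N - deg p) such f, and the distinct monic
  irreducible divisors of f have total degree at most N. Abel summation turns S(N) \<le> N into
  a bound H_m for the sum of 1/|p| over deg p \<le> m, and 1 + x < exp x for x > 0 makes the
  bound on the product strict.\<close>

definition monic_polys :: "nat \<Rightarrow> 'a::zero_neq_one poly set" where
  "monic_polys n = {f. lead_coeff f = 1 \<and> degree f = n}"

lemma coeffs_Poly_snoc_one [simp]: "coeffs (Poly (xs @ [1 :: 'a::zero_neq_one])) = xs @ [1]"
  unfolding coeffs_Poly by (rule strip_while_append) simp

lemma monic_polys_eq_image_Poly:
  "monic_polys n = (\<lambda>xs. Poly (xs @ [1])) ` {xs. length xs = n}"
proof (intro set_eqI iffI)
  fix f :: "'a poly" assume "f \<in> monic_polys n"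
  then have f: "lead_coeff f = 1" "degree f = n" unfolding monic_polys_def by blast+
  then have "f \<noteq> 0" by auto
  then have "last (coeffs f) = 1" "coeffs f \<noteq> []"
    using f(1) by (simp_all add: last_coeffs_eq_coeff_degree)
  then have "coeffs f = butlast (coeffs f) @ [1]"
    by (metis append_butlast_last_id)
  then have "f = Poly (butlast (coeffs f) @ [1])"
    by (metis Poly_coeffs)
  moreover have "length (butlast (coeffs f)) = n"
    using f(2) by (simp add: degree_eq_length_coeffs)
  ultimately show "f \<in> (\<lambda>xs. Poly (xs @ [1])) ` {xs. length xs = n}"
    by blast
next
  fix f :: "'a poly" assume "f \<in> (\<lambda>xs. Poly (xs @ [1])) ` {xs. length xs = n}"
  then obtain xs where xs: "f = Poly (xs @ [1])" "length xs = n" by auto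
  then have "f \<noteq> 0" by (auto simp flip: coeffs_eq_Nil)
  then have "lead_coeff f = last (coeffs f)"
    by (simp add: last_coeffs_eq_coeff_degree)
  then have "lead_coeff f = 1"
    by (simp add: xs(1))
  moreover have "degree f = n"
    using xs by (simp add: degree_eq_length_coeffs)
  ultimately show "f \<in> monic_polys n" by (simp add: monic_polys_def)
qed

lemma
  shows finite_monic_polys: "finite (monic_polys n :: 'a::{finite,zero_neq_one} poly set)"
    and card_monic_polys: "card (monic_polys n :: 'a poly set) = CARD('a) ^ n"
proof -
  have "inj_on (\<lambda>xs. Poly (xs @ [1 :: 'a])) {xs. length xs = n}"
    by (intro inj_onI) (metis coeffs_Poly_snoc_one butlast_snoc)
  moreover have "card {xs :: 'a list. length xs = n} = CARD('a) ^ n"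
    using card_lists_length_eq[of "UNIV :: 'a set" n] by simp
  ultimately show "card (monic_polys n :: 'a poly set) = CARD('a) ^ n"
    by (simp add: monic_polys_eq_image_Poly card_image)
  show "finite (monic_polys n :: 'a poly set)"
    using finite_lists_length_eq[of "UNIV :: 'a set" n] by (simp add: monic_polys_eq_image_Poly)
qed

lemma monic_polys_dvd_eq_image:
  fixes p :: "'a::idom poly"
  assumes p: "lead_coeff p = 1" "degree p \<le> N"
  shows "{f \<in> monic_polys N. p dvd f} = (*) p ` monic_polys (N - degree p)"
proof (intro set_eqI iffI)
  fix f assume f: "f \<in> {f \<in> monic_polys N. p dvd f}"
  then obtain g where g: "f = p * g" by blast
  have f1: "lead_coeff f = 1" "degree f = N" using f unfolding monic_polys_def by blast+
  then have "p \<noteq> 0" "g \<noteq> 0" using g by auto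
  then have "degree g = N - degree p"
    using f1(2) by (simp add: g degree_mult_eq)
  moreover have "lead_coeff g = 1"
    using f1(1) p(1) by (metis g lead_coeff_mult mult_1)
  ultimately show "f \<in> (*) p ` monic_polys (N - degree p)"
    using g by (auto simp: monic_polys_def)
next
  fix f assume "f \<in> (*) p ` monic_polys (N - degree p)"
  then obtain g where g: "f = p * g" "lead_coeff g = 1" "degree g = N - degree p"
    unfolding monic_polys_def by blast
  then have "g \<noteq> 0" "p \<noteq> 0" using p by auto
  then have "degree f = N"
    using g p by (simp add: degree_mult_eq)
  moreover have "lead_coeff f = 1"
    using g p by (metis lead_coeff_mult mult_1)
  ultimately show "f \<in> {f \<in> monic_polys N. p dvd f}"
    using g by (simp add: monic_polys_def)
qed

lemma card_monic_polys_dvd: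
  fixes p :: "'a::{finite,idom} poly"
  assumes "lead_coeff p = 1" "degree p \<le> N"
  shows "card {f \<in> monic_polys N. p dvd f} = CARD('a) ^ (N - degree p)"
proof -
  have "p \<noteq> 0" using assms by auto
  then have "inj_on ((*) p) (monic_polys (N - degree p))" by (intro inj_onI) simp
  then show ?thesis
    by (simp add: monic_polys_dvd_eq_image[OF assms] card_image card_monic_polys)
qed

definition monic_irreducibles :: "nat \<Rightarrow> 'a::field poly set" where
  "monic_irreducibles N = {p. lead_coeff p = 1 \<and> irreducible p \<and> degree p \<le> N}"

lemma degree_irreducible_pos: "irreducible (p :: 'a::field poly) \<Longrightarrow> degree p > 0"
  using is_unit_iff_degree[of p] irreducible_not_unit[of p] by (cases "p = 0") auto

lemma finite_monic_irreducibles: "finite (monic_irreducibles N :: 'a::{finite,field} poly set)"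
proof (rule finite_subset)
  show "monic_irreducibles N \<subseteq> (\<Union>n\<le>N. monic_polys n :: 'a poly set)"
    by (auto simp: monic_irreducibles_def monic_polys_def)
qed (simp add: finite_monic_polys)

lemma monic_irreducible_dvd_imp_eq:
  fixes p s :: "'a::field poly"
  assumes "irreducible p" "irreducible s" "lead_coeff p = 1" "lead_coeff s = 1" "p dvd s"
  shows "p = s"
proof -
  obtain k where k: "s = p * k" using assms(5) by (elim dvdE)
  then have "is_unit k" using assms(1,2) irreducibleD irreducible_not_unit by blast
  then obtain a where "k = [:a:]" by (elim is_unit_polyE)
  moreover have "lead_coeff k = 1" using assms(3,4) by (simp add: k lead_coeff_mult)
  ultimately show ?thesis using k by (simp add: one_pCons)
qed

lemma prod_monic_irreducibles_dvd:
  fixes f :: "'a::field poly"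
  assumes "finite S" "\<And>p. p \<in> S \<Longrightarrow> lead_coeff p = 1 \<and> irreducible p \<and> p dvd f"
  shows "\<Prod>S dvd f"
  using assms
proof (induction S rule: finite_induct)
  case (insert x S)
  then have x: "lead_coeff x = 1" "irreducible x" "x dvd f" and "\<Prod>S dvd f" by auto
  then obtain g where g: "f = \<Prod>S * g" by (elim dvdE)
  have prime: "prime_elem x" using x(2) by (rule field_poly_irreducible_imp_prime)
  have "\<not> x dvd \<Prod>S"
  proof
    assume "x dvd \<Prod>S"
    then have "x dvd prod_mset (mset_set S)" by (simp add: prod_unfold_prod_mset)
    then obtain s where "s \<in> S" "x dvd s"
      using prime insert.hyps(1) by (auto elim: prime_elem_dvd_prod_msetE)
    then show False
      using monic_irreducible_dvd_imp_eq[of x s] x insert by auto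
  qed
  then have "x dvd g" using prime x(3) g by (auto dest: prime_elem_dvd_multD)
  then have "x * \<Prod>S dvd f" using g by (simp add: mult_dvd_mono mult.commute)
  then show ?case using insert.hyps by simp
qed simp

lemma sum_degree_monic_irreducible_divisors_le:
  fixes f :: "'a::field poly"
  assumes "f \<noteq> 0" "finite S" "\<And>p. p \<in> S \<Longrightarrow> lead_coeff p = 1 \<and> irreducible p \<and> p dvd f"
  shows "(\<Sum>p\<in>S. degree p) \<le> degree f"
proof -
  have "(\<Sum>p\<in>S. degree p) = degree (\<Prod>S)"
    by (rule degree_prod_sum_eq[symmetric]) (use assms(3) in force)
  also have "\<dots> \<le> degree f"
    using prod_monic_irreducibles_dvd[OF assms(2,3)] assms(1) by (rule dvd_imp_degree_le)
  finally show ?thesis .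
qed

lemma sum_degree_mult_card_monic_irreducibles_le:
  "(\<Sum>p\<in>monic_irreducibles N. degree (p :: 'a::{finite,field} poly) * CARD('a) ^ (N - degree p))
     \<le> N * CARD('a) ^ N"
proof -
  have "(\<Sum>p\<in>monic_irreducibles N. degree (p :: 'a poly) * CARD('a) ^ (N - degree p))
      = (\<Sum>p\<in>monic_irreducibles N. \<Sum>f\<in>{f \<in> monic_polys N. p dvd f}. degree (p :: 'a poly))"
    by (rule sum.cong[OF refl]) (simp add: card_monic_polys_dvd monic_irreducibles_def)
  also have "\<dots> = (\<Sum>f\<in>monic_polys N. \<Sum>p\<in>{p \<in> monic_irreducibles N. p dvd f}. degree (p :: 'a poly))"
    by (rule sum.swap_restrict) (simp_all add: finite_monic_irreducibles finite_monic_polys)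
  also have "\<dots> \<le> (\<Sum>f\<in>(monic_polys N :: 'a poly set). N)"
  proof (rule sum_mono)
    fix f :: "'a poly" assume f: "f \<in> monic_polys N"
    then have "f \<noteq> 0" "degree f = N" unfolding monic_polys_def by auto
    have "finite {p \<in> monic_irreducibles N. p dvd f}"
      by (rule finite_subset[OF _ finite_monic_irreducibles]) blast
    then have "(\<Sum>p\<in>{p \<in> monic_irreducibles N. p dvd f}. degree p) \<le> degree f"
      by (rule sum_degree_monic_irreducible_divisors_le[OF \<open>f \<noteq> 0\<close>]) (simp add: monic_irreducibles_def)
    then show "(\<Sum>p\<in>{p \<in> monic_irreducibles N. p dvd f}. degree p) \<le> N"
      using \<open>degree f = N\<close> by simp
  qed
  also have "\<dots> = N * CARD('a) ^ N" by (simp add: card_monic_polys)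
  finally show ?thesis .
qed

lemma sum_degree_div_poly_abs_le:
  "(\<Sum>p\<in>monic_irreducibles N. real (degree p) / poly_abs (p :: 'a::{finite,field} poly)) \<le> real N"
proof -
  define q where "q = real CARD('a)"
  have q: "q > 0" by (simp add: q_def)
  have "(\<Sum>p\<in>monic_irreducibles N. real (degree p) / poly_abs (p :: 'a poly))
      = (\<Sum>p\<in>monic_irreducibles N. real (degree (p :: 'a poly) * CARD('a) ^ (N - degree p))) / q ^ N"
    unfolding sum_divide_distrib
  proof (intro sum.cong refl)
    fix p :: "'a poly" assume "p \<in> monic_irreducibles N"
    then have "q ^ N = q ^ degree p * q ^ (N - degree p)"
      by (simp add: monic_irreducibles_def flip: power_add)
    then show "real (degree p) / poly_abs p = real (degree p * CARD('a) ^ (N - degree p)) / q ^ N"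
      using q by (simp add: poly_abs_def q_def)
  qed
  also have "\<dots> \<le> real (N * CARD('a) ^ N) / q ^ N"
    unfolding of_nat_sum[symmetric] using sum_degree_mult_card_monic_irreducibles_le[where 'a='a, of N] q
    by (intro divide_right_mono) (simp_all only: of_nat_le_iff, simp)
  also have "\<dots> = real N" using q by (simp add: q_def)
  finally show ?thesis .
qed

lemma sum_le_harm_minus_one_plus_mean:
  fixes c :: "nat \<Rightarrow> real"
  assumes weighted: "\<And>N. (\<Sum>n=1..N. real n * c n) \<le> real N" and "m > 0"
  shows "(\<Sum>n=1..m. c n) \<le> harm m - 1 + (\<Sum>n=1..m. real n * c n) / real m"
  using \<open>m > 0\<close>
proof (induction m rule: nat_induct_non_zero)
  case 1
  then show ?case by (simp add: harm_def)
next
  case (Suc m)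
  define S where "S = (\<Sum>n=1..m. real n * c n)"
  have "S / real m - S / (real m + 1) = S / (real m * (real m + 1))"
    using Suc.hyps by (simp add: field_simps)
  also have "\<dots> \<le> real m / (real m * (real m + 1))"
    using weighted[of m] by (intro divide_right_mono) (simp_all add: S_def)
  also have "\<dots> = 1 / (real m + 1)"
    using Suc.hyps by simp
  finally have "S / real m \<le> 1 / (real m + 1) + S / (real m + 1)" by simp
  moreover have "(\<Sum>n=1..Suc m. real n * c n) / real (Suc m) = S / (real m + 1) + c (Suc m)"
    by (simp add: S_def add_divide_distrib)
  moreover have "harm (Suc m) = harm m + 1 / (real m + 1)"
    by (simp add: harm_Suc inverse_eq_divide add.commute)
  moreover have "(\<Sum>n=1..Suc m. c n) = (\<Sum>n=1..m. c n) + c (Suc m)"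
    by simp
  ultimately show ?case
    using Suc.IH unfolding S_def by linarith
qed

lemma sum_le_harm_of_weighted_partial_sums_le:
  fixes c :: "nat \<Rightarrow> real"
  assumes "\<And>N. (\<Sum>n=1..N. real n * c n) \<le> real N"
  shows "(\<Sum>n=1..m. c n) \<le> harm m"
proof (cases "m = 0")
  case False
  then have "(\<Sum>n=1..m. real n * c n) / real m \<le> 1"
    using assms[of m] by simp
  then show ?thesis
    using sum_le_harm_minus_one_plus_mean[OF assms, of m] False by linarith
qed (simp add: harm_def)

lemma one_plus_less_exp: "(x::real) > 0 \<Longrightarrow> 1 + x < exp x"
proof -
  assume x: "x > 0"
  have "1 + x < (1 + x / 2)^2" using x by (simp add: power2_eq_square field_simps)
  also have "\<dots> \<le> exp (x / 2)^2" using x by (intro power_mono) auto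
  also have "\<dots> = exp x" by (simp add: power2_eq_square flip: exp_add)
  finally show ?thesis .
qed

lemma prod_one_plus_less_exp_sum:
  fixes x :: "'b \<Rightarrow> real"
  assumes "finite A" "A \<noteq> {}" "\<And>a. a \<in> A \<Longrightarrow> x a > 0"
  shows "(\<Prod>a\<in>A. 1 + x a) < exp (\<Sum>a\<in>A. x a)"
proof -
  obtain a where "a \<in> A" using assms(2) by blast
  have "(\<Prod>a\<in>A. 1 + x a) < (\<Prod>a\<in>A. exp (x a))"
  proof (rule prod_mono_strict[OF \<open>a \<in> A\<close>])
    show "1 + x a < exp (x a)" using assms(3)[OF \<open>a \<in> A\<close>] by (rule one_plus_less_exp)
    show "0 \<le> 1 + x b \<and> 1 + x b \<le> exp (x b)" if "b \<in> A" for b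
      using assms(3)[OF that] by simp
  qed (use assms(1) in simp_all)
  then show ?thesis by (simp add: exp_sum assms(1))
qed

lemma sum_monic_irreducibles_by_degree:
  "(\<Sum>p\<in>monic_irreducibles N. F p)
     = (\<Sum>n=1..N. \<Sum>p\<in>{p \<in> monic_irreducibles n. degree (p :: 'a::{finite,field} poly) = n}. F p)"
proof -
  have "(\<Sum>p\<in>monic_irreducibles N. F p)
      = (\<Sum>n=1..N. \<Sum>p\<in>{p \<in> monic_irreducibles N. degree (p :: 'a poly) = n}. F p)"
    by (rule sum.group[symmetric])
      (use finite_monic_irreducibles degree_irreducible_pos in \<open>auto simp: monic_irreducibles_def Suc_le_eq\<close>)
  also have "\<dots> = (\<Sum>n=1..N. \<Sum>p\<in>{p \<in> monic_irreducibles n. degree (p :: 'a poly) = n}. F p)"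
    by (intro sum.cong refl) (auto simp: monic_irreducibles_def)
  finally show ?thesis .
qed

theorem lemma2:
  fixes m :: nat
  assumes "m \<ge> 1"
  shows "(\<Prod>p \<in> {p :: 'a::{finite,field} poly. lead_coeff p = 1 \<and> irreducible p \<and> degree p \<le> m}.
            1 + 1 / poly_abs p) < exp (harm m :: real)"
proof -
  define c where "c n = (\<Sum>p\<in>{p \<in> monic_irreducibles n. degree p = n}. 1 / poly_abs (p :: 'a poly))" for n
  have "[:0, 1:] \<in> (monic_irreducibles m :: 'a poly set)"
    using assms by (auto simp: monic_irreducibles_def intro: irreducible_linear_field_poly)
  then have "(\<Prod>p\<in>monic_irreducibles m. 1 + 1 / poly_abs (p :: 'a poly))
      < exp (\<Sum>p\<in>monic_irreducibles m. 1 / poly_abs (p :: 'a poly))"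
    by (intro prod_one_plus_less_exp_sum finite_monic_irreducibles) (auto simp: poly_abs_def)
  also have "(\<Sum>p\<in>monic_irreducibles m. 1 / poly_abs (p :: 'a poly)) = (\<Sum>n=1..m. c n)"
    unfolding c_def by (rule sum_monic_irreducibles_by_degree)
  also have "\<dots> \<le> harm m"
  proof (rule sum_le_harm_of_weighted_partial_sums_le)
    fix N
    have "(\<Sum>n=1..N. real n * c n)
        = (\<Sum>p\<in>monic_irreducibles N. real (degree p) / poly_abs (p :: 'a poly))"
      unfolding sum_monic_irreducibles_by_degree[of _ N] c_def sum_distrib_left
      by (intro sum.cong refl) auto
    also have "\<dots> \<le> real N" by (rule sum_degree_div_poly_abs_le)
    finally show "(\<Sum>n=1..N. real n * c n) \<le> real N" .
  qed
  finally show ?thesis by (simp add: monic_irreducibles_def)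
qed

end
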